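(* Let $\mathcal{X}\subseteq\mathbb{R}^d$ be closed and convex, $\mu,\sigma,\delta>0$. Let $h:\mathcal{X}\to\mathbb{R}$ be continuously differentiable with $D_h(x,y)\ge\frac\sigma2\|x-y\|^2$ for all $x,y$, and let $f:\mathcal{X}\to\mathbb{R}$ be differentiable and $\mu$-uniformly convex with respect to $h$ (i.e. $D_f(x,y)\ge\mu D_h(x,y)$ for all $x,y$), with minimizer $x^\ast$. Let $(A_k)_{k\ge0}$ be a nondecreasing sequence of positive numbers, $\alpha_k=A_{k+1}-A_k$, $\tau_k=\alpha_k/A_k$, and $E_k=A_k\big(\mu D_h(x^\ast,z_k)+f(x_k)-f(x^\ast)\big)$. Suppose sequences $(x_k),(z_k)$ in $\mathcal{X}$ satisfy, for all $k$, $$x_{k+1}=\frac{\tau_k}{1+\tau_k}z_k+\frac1{1+\tau_k}x_k,\qquad \nabla h(z_{k+1})=\nabla h(z_k)+\tau_k\Big(\nabla h(x_{k+1})-\nabla h(z_{k+1})-\frac1\mu\nabla f(x_{k+1})\Big).$$ Then $$\frac{E_{k+1}-E_k}{\delta}\le\frac{A_k\tau_k^2}{2\mu\sigma\delta}\|\nabla f(x_{k+1})\|^2.$$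
   Context: $\|\cdot\|$ is the Euclidean norm; for differentiable $g$, $D_g(y,x)=g(y)-g(x)-\langle\nabla g(x),y-x\rangle$. *)

theory Defs
  imports "HOL-Analysis.Analysis"
begin

definition bregman :: "('a::real_inner \<Rightarrow> real) \<Rightarrow> ('a \<Rightarrow> 'a) \<Rightarrow> 'a \<Rightarrow> 'a \<Rightarrow> real" where
  "bregman g dg y x = g y - g x - inner (dg x) (y - x)"

end

theory Submission
  imports Defs
begin

text \<open>Write a = A_k, a' = A_{k+1}, \<alpha> = a' - a and g = \<nabla>f(x_{k+1}). After clearing the
  denominators, the two update rules read \<alpha>(x_{k+1} - z_k) = a(x_k - x_{k+1}) and
  a(\<nabla>h(z_k) - \<nabla>h(z_{k+1})) = \<alpha>(\<nabla>h(z_{k+1}) - \<nabla>h(x_{k+1})) + (\<alpha>/\<mu>) g. Together with two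
  applications of the three-point identity for Bregman divergences they turn the energy
  difference into the exact identity
    E_{k+1} - E_k = - \<alpha>(D_f(x*,x_{k+1}) - \<mu> D_h(x*,x_{k+1})) - a D_f(x_k,x_{k+1})
                    - \<alpha>\<mu> D_h(z_{k+1},x_{k+1}) - a\<mu> D_h(z_{k+1},z_k) + \<alpha>\<langle>g, z_k - z_{k+1}\<rangle>.
  The first three terms are nonpositive by uniform convexity, and with t = \<parallel>z_{k+1} - z_k\<parallel>
  the last two are at most \<alpha>\<parallel>g\<parallel>t - a\<mu>\<sigma>t^2/2 \<le> \<alpha>^2\<parallel>g\<parallel>^2/(2a\<mu>\<sigma>).
  Only the gradient fields enter.\<close>

lemma bregman_three_point:
  fixes g :: "'a::real_inner \<Rightarrow> real"
  shows "bregman g dg a c - bregman g dg a b = - bregman g dg c b + inner (dg b - dg c) (a - c)"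
  unfolding bregman_def by (simp add: inner_diff_left inner_diff_right algebra_simps)

lemma bregman_nonneg_if_strongly_convex:
  assumes "\<sigma> / 2 * (norm (a - b))\<^sup>2 \<le> bregman h gh a b" and "\<sigma> \<ge> 0"
  shows "0 \<le> bregman h gh a b"
  using assms by (meson order_trans mult_nonneg_nonneg divide_nonneg_nonneg zero_le_power2 zero_le_numeral)

lemma linear_minus_quadratic_le:
  fixes b c t :: real
  assumes "c > 0"
  shows "b * t - c / 2 * t\<^sup>2 \<le> b\<^sup>2 / (2 * c)"
proof -
  have "0 \<le> (c * t - b)\<^sup>2" by simp
  hence "2 * c * (b * t - c / 2 * t\<^sup>2) \<le> b\<^sup>2"
    by (simp add: power2_eq_square algebra_simps)
  thus ?thesis using assms by (simp add: pos_le_divide_eq mult.commute)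
qed

lemma coupling_step_scaled:
  fixes x x' z :: "'a::real_vector"
  assumes "a > 0" "a' > 0"
    and "x' = ((a' - a) / a / (1 + (a' - a) / a)) *\<^sub>R z + (1 / (1 + (a' - a) / a)) *\<^sub>R x"
  shows "(a' - a) *\<^sub>R (x' - z) = a *\<^sub>R (x - x')"
proof -
  have "1 + (a' - a) / a = a' / a" using assms(1) by (simp add: field_simps)
  hence "a' *\<^sub>R x' = (a' - a) *\<^sub>R z + a *\<^sub>R x"
    using assms by (simp add: scaleR_add_right)
  thus ?thesis by (simp add: algebra_simps)
qed

lemma mirror_step_scaled:
  fixes gz gz' gx' g :: "'a::real_vector"
  assumes "a > 0"
    and "gz' = gz + ((a' - a) / a) *\<^sub>R (gx' - gz' - (1 / \<mu>) *\<^sub>R g)"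
  shows "a *\<^sub>R (gz - gz') = (a' - a) *\<^sub>R (gz' - gx') + ((a' - a) / \<mu>) *\<^sub>R g"
proof -
  have "a *\<^sub>R (gz' - gz) = (a' - a) *\<^sub>R (gx' - gz' - (1 / \<mu>) *\<^sub>R g)"
    using arg_cong[OF assms(2), of "\<lambda>v. a *\<^sub>R (v - gz)"] assms(1) by simp
  thus ?thesis by (simp add: algebra_simps scaleR_diff_right)
qed

lemma lyapunov_step_identity:
  fixes f h :: "'a::real_inner \<Rightarrow> real" and gf gh :: "'a \<Rightarrow> 'a"
  assumes "\<mu> \<noteq> 0"
    and coupling: "(a' - a) *\<^sub>R (x' - z) = a *\<^sub>R (x - x')"
    and mirror: "a *\<^sub>R (gh z - gh z') = (a' - a) *\<^sub>R (gh z' - gh x') + ((a' - a) / \<mu>) *\<^sub>R gf x'"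
  shows "a' * (\<mu> * bregman h gh xs z' + f x' - f xs) - a * (\<mu> * bregman h gh xs z + f x - f xs)
    = - (a' - a) * (bregman f gf xs x' - \<mu> * bregman h gh xs x') - a * bregman f gf x x'
      - (a' - a) * \<mu> * bregman h gh z' x' - a * \<mu> * bregman h gh z' z
      + (a' - a) * inner (gf x') (z - z')"
proof -
  have C: "(a' - a) * inner (gf x') (x' - z) = a * inner (gf x') (x - x')"
    using arg_cong[OF coupling, of "inner (gf x')"] by simp
  have "a * inner (gh z - gh z') (xs - z')
      = (a' - a) * inner (gh z' - gh x') (xs - z') + (a' - a) / \<mu> * inner (gf x') (xs - z')"
    using arg_cong[OF mirror, of "\<lambda>v. inner v (xs - z')"] by (simp add: inner_add_left)
  hence M: "\<mu> * a * inner (gh z - gh z') (xs - z')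
      = \<mu> * (a' - a) * inner (gh z' - gh x') (xs - z') + (a' - a) * inner (gf x') (xs - z')"
    using assms(1) by (simp add: field_simps)
  have T1: "bregman h gh xs z' - bregman h gh xs z = - bregman h gh z' z + inner (gh z - gh z') (xs - z')"
    by (rule bregman_three_point)
  have T2: "bregman h gh xs z' - bregman h gh xs x' = - bregman h gh z' x' + inner (gh x' - gh z') (xs - z')"
    by (rule bregman_three_point)
  have split: "inner (gf x') (xs - z') = inner (gf x') (xs - x') + inner (gf x') (x' - z) + inner (gf x') (z - z')"
    by (simp add: inner_diff_right)
  have "inner (gh z' - gh x') (xs - z') = - inner (gh x' - gh z') (xs - z')"
    by (simp add: inner_diff_left)
  with C M T1 T2 split show ?thesis
    unfolding bregman_def[of f] by algebra
qed

lemma lyapunov_step_bound: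
  fixes f h :: "'a::real_inner \<Rightarrow> real" and gf gh :: "'a \<Rightarrow> 'a"
  assumes \<mu>_pos: "\<mu> > 0" and \<sigma>_pos: "\<sigma> > 0" and a: "a > 0" and \<alpha>: "a \<le> a'"
    and h_strong: "\<And>u v. u \<in> X \<Longrightarrow> v \<in> X \<Longrightarrow> \<sigma> / 2 * (norm (u - v))\<^sup>2 \<le> bregman h gh u v"
    and f_unif: "\<And>u v. u \<in> X \<Longrightarrow> v \<in> X \<Longrightarrow> \<mu> * bregman h gh u v \<le> bregman f gf u v"
    and in_X: "xs \<in> X" "x \<in> X" "x' \<in> X" "z \<in> X" "z' \<in> X"
    and coupling: "(a' - a) *\<^sub>R (x' - z) = a *\<^sub>R (x - x')"
    and mirror: "a *\<^sub>R (gh z - gh z') = (a' - a) *\<^sub>R (gh z' - gh x') + ((a' - a) / \<mu>) *\<^sub>R gf x'"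
  shows "a' * (\<mu> * bregman h gh xs z' + f x' - f xs) - a * (\<mu> * bregman h gh xs z + f x - f xs)
    \<le> a * ((a' - a) / a)\<^sup>2 / (2 * \<mu> * \<sigma>) * (norm (gf x'))\<^sup>2"
proof -
  define g t where "g = gf x'" and "t = norm (z' - z)"
  have h_nonneg: "\<And>u v. u \<in> X \<Longrightarrow> v \<in> X \<Longrightarrow> 0 \<le> bregman h gh u v"
    using bregman_nonneg_if_strongly_convex h_strong \<sigma>_pos by (meson less_imp_le)
  have "\<mu> \<noteq> 0" using \<mu>_pos by simp
  note step_id = lyapunov_step_identity[where h = h and gh = gh and f = f and gf = gf and xs = xs,
      OF this coupling mirror]
  have "a' * (\<mu> * bregman h gh xs z' + f x' - f xs) - a * (\<mu> * bregman h gh xs z + f x - f xs)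
    \<le> (a' - a) * norm g * t - a * \<mu> * \<sigma> / 2 * t\<^sup>2"
  proof -
    have "0 \<le> (a' - a) * (bregman f gf xs x' - \<mu> * bregman h gh xs x')"
      using \<alpha> f_unif[of xs x'] in_X by simp
    moreover have "0 \<le> a * bregman f gf x x'"
      using a f_unif[of x x'] h_nonneg[of x x'] \<mu>_pos in_X
      by (smt (verit) mult_nonneg_nonneg)
    moreover have "0 \<le> (a' - a) * \<mu> * bregman h gh z' x'"
      using \<alpha> \<mu>_pos h_nonneg[of z' x'] in_X by simp
    moreover have "a * \<mu> * \<sigma> / 2 * t\<^sup>2 \<le> a * \<mu> * bregman h gh z' z"
      using mult_left_mono[OF h_strong[of z' z], of "a * \<mu>"] a \<mu>_pos in_X
      by (simp add: t_def)
    moreover have "(a' - a) * inner (gf x') (z - z') \<le> (a' - a) * norm g * t"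
      using mult_left_mono[OF norm_cauchy_schwarz[of g "z - z'"], of "a' - a"] \<alpha>
      by (simp add: g_def t_def norm_minus_commute mult.assoc)
    ultimately show ?thesis using step_id by linarith
  qed
  also have "\<dots> \<le> ((a' - a) * norm g)\<^sup>2 / (2 * (a * \<mu> * \<sigma>))"
    using linear_minus_quadratic_le[of "a * \<mu> * \<sigma>" "(a' - a) * norm g" t] a \<mu>_pos \<sigma>_pos
    by (simp add: mult.assoc)
  also have "\<dots> = a * ((a' - a) / a)\<^sup>2 / (2 * \<mu> * \<sigma>) * (norm g)\<^sup>2"
    using a \<mu>_pos \<sigma>_pos by (simp add: power2_eq_square field_simps)
  finally show ?thesis by (simp add: g_def)
qed

theorem proposition8:
  fixes X :: "(real ^ 'd) set"
    and h f :: "real ^ 'd \<Rightarrow> real"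
    and gh gf :: "real ^ 'd \<Rightarrow> real ^ 'd"
    and \<mu> \<sigma> \<delta> :: real
    and xstar :: "real ^ 'd"
    and A :: "nat \<Rightarrow> real"
    and x z :: "nat \<Rightarrow> real ^ 'd"
  assumes X_closed: "closed X" and X_convex: "convex X"
    and \<mu>_pos: "\<mu> > 0" and \<sigma>_pos: "\<sigma> > 0" and \<delta>_pos: "\<delta> > 0"
    and h_grad: "\<And>y. y \<in> X \<Longrightarrow> (h has_derivative (\<lambda>v. inner (gh y) v)) (at y within X)"
    and h_C1: "continuous_on X gh"
    and h_strong: "\<And>a b. a \<in> X \<Longrightarrow> b \<in> X \<Longrightarrow> bregman h gh a b \<ge> \<sigma> / 2 * (norm (a - b))\<^sup>2"
    and f_grad: "\<And>y. y \<in> X \<Longrightarrow> (f has_derivative (\<lambda>v. inner (gf y) v)) (at y within X)"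
    and f_unif: "\<And>a b. a \<in> X \<Longrightarrow> b \<in> X \<Longrightarrow> bregman f gf a b \<ge> \<mu> * bregman h gh a b"
    and xstar_in: "xstar \<in> X"
    and xstar_min: "\<And>y. y \<in> X \<Longrightarrow> f xstar \<le> f y"
    and A_pos: "\<And>k. A k > 0"
    and A_mono: "mono A"
    and x_in: "\<And>k. x k \<in> X" and z_in: "\<And>k. z k \<in> X"
    and x_step: "\<And>k. x (Suc k) =
        ((A (Suc k) - A k) / A k / (1 + (A (Suc k) - A k) / A k)) *\<^sub>R z k
        + (1 / (1 + (A (Suc k) - A k) / A k)) *\<^sub>R x k"
    and z_step: "\<And>k. gh (z (Suc k)) = gh (z k) + ((A (Suc k) - A k) / A k) *\<^sub>R
        (gh (x (Suc k)) - gh (z (Suc k)) - (1 / \<mu>) *\<^sub>R gf (x (Suc k)))"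
  shows "\<And>k. (let \<tau> = (A (Suc k) - A k) / A k;
              E = (\<lambda>j. A j * (\<mu> * bregman h gh xstar (z j) + f (x j) - f xstar))
          in (E (Suc k) - E k) / \<delta> \<le> A k * \<tau>\<^sup>2 / (2 * \<mu> * \<sigma> * \<delta>) * (norm (gf (x (Suc k))))\<^sup>2)"
proof -
  fix k
  have a: "A k > 0" and a': "A (Suc k) > 0" using A_pos by auto
  have "A (Suc k) * (\<mu> * bregman h gh xstar (z (Suc k)) + f (x (Suc k)) - f xstar)
      - A k * (\<mu> * bregman h gh xstar (z k) + f (x k) - f xstar)
    \<le> A k * ((A (Suc k) - A k) / A k)\<^sup>2 / (2 * \<mu> * \<sigma>) * (norm (gf (x (Suc k))))\<^sup>2"
    using \<mu>_pos \<sigma>_pos a h_strong f_unif xstar_in x_in z_in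
    by (intro lyapunov_step_bound[where X = X]
        coupling_step_scaled[OF a a' x_step] mirror_step_scaled[OF a z_step])
      (auto simp: A_mono[THEN monoD])
  then show "?thesis k"
    using \<delta>_pos by (simp add: Let_def divide_right_mono field_simps)
qed

end
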